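(* If $\mathcal{H}=(V,\mathcal{E})$ is a twin-free hypergraph, then $|V|\leq (TC(\mathcal{H}))^{vc^*(\mathcal{H})}+1$.
   Context: A hypergraph $\mathcal{H}=(V,\mathcal{E})$ (finite) is twin-free if for any two distinct vertices there is a hyperedge containing exactly one of them. A test cover of $\mathcal{H}$ is a set $\mathcal{C}\subseteq\mathcal{E}$ such that every vertex lies in some edge of $\mathcal{C}$ and for every pair $x,y$ of distinct vertices some edge of $\mathcal{C}$ contains exactly one of $x,y$; $TC(\mathcal{H})$ is the minimum size of a test cover. For $X\subseteq V$, the projection is $\mathcal{H}_{|X}=\{e\cap X: e\in\mathcal{E}\}$; $X$ is shattered if $|\mathcal{H}_{|X}|=2^{|X|}$; the VC dimension $vc(\mathcal{H})$ is the maximum size of a shattered set. The dual hypergraph $\mathcal{H}^*$ has the hyperedges of $\mathcal{H}$ as vertices and, for each vertex $v$ of $\mathcal{H}$, a hyperedge consisting of the hyperedges of $\mathcal{H}$ containing $v$; the dual VC dimension is $vc^*(\mathcal{H})=vc(\mathcal{H}^* )$. *)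

theory Defs
  imports Main
begin

definition hypergraph :: "'a set \<Rightarrow> 'a set set \<Rightarrow> bool" where
  "hypergraph V E \<longleftrightarrow> finite V \<and> E \<subseteq> Pow V"

definition twin_free :: "'a set \<Rightarrow> 'a set set \<Rightarrow> bool" where
  "twin_free V E \<longleftrightarrow> (\<forall>x\<in>V. \<forall>y\<in>V. x \<noteq> y \<longrightarrow> (\<exists>e\<in>E. (x \<in> e) \<noteq> (y \<in> e)))"

definition test_cover :: "'a set \<Rightarrow> 'a set set \<Rightarrow> 'a set set \<Rightarrow> bool" where
  "test_cover V E C \<longleftrightarrow> C \<subseteq> E \<and> (\<forall>v\<in>V. \<exists>e\<in>C. v \<in> e)
     \<and> (\<forall>x\<in>V. \<forall>y\<in>V. x \<noteq> y \<longrightarrow> (\<exists>e\<in>C. (x \<in> e) \<noteq> (y \<in> e)))"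

definition TC :: "'a set \<Rightarrow> 'a set set \<Rightarrow> nat" where
  "TC V E = (LEAST k. \<exists>C. test_cover V E C \<and> card C = k)"

definition projection :: "'b set set \<Rightarrow> 'b set \<Rightarrow> 'b set set" where
  "projection F S = (\<lambda>f. f \<inter> S) ` F"

definition shattered :: "'b set set \<Rightarrow> 'b set \<Rightarrow> bool" where
  "shattered F S \<longleftrightarrow> card (projection F S) = 2 ^ card S"

definition vc :: "'b set \<Rightarrow> 'b set set \<Rightarrow> nat" where
  "vc X F = Max {card S | S. S \<subseteq> X \<and> shattered F S}"

text \<open>Dual hypergraph: vertices are the hyperedges, and for each vertex v a hyperedge
  consisting of all hyperedges containing v.\<close>
definition dual_edges :: "'a set \<Rightarrow> 'a set set \<Rightarrow> 'a set set set" where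
  "dual_edges V E = (\<lambda>v. {e \<in> E. v \<in> e}) ` V"

definition vc_dual :: "'a set \<Rightarrow> 'a set set \<Rightarrow> nat" where
  "vc_dual V E = vc E (dual_edges V E)"

end

theory Submission
  imports Defs
begin

text \<open>Take a minimum test cover \<open>C\<close>. Since \<open>C\<close> separates the vertices, the traces
  \<open>{e \<in> C. v \<in> e}\<close> of the vertices form a family of \<open>|V|\<close> distinct subsets of \<open>C\<close>. By the
  Sauer--Shelah--Pajor lemma this family shatters at least \<open>|V|\<close> subsets of \<open>C\<close>; each of them
  is shattered by the dual hypergraph, hence has at most \<open>d = vc_dual V E\<close> elements, and a set of
  size \<open>|C|\<close> has at most \<open>|C|\<^sup>d + 1\<close> subsets of size at most \<open>d\<close>.\<close>

definition shatters :: "'b set set \<Rightarrow> 'b set \<Rightarrow> bool" where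
  "shatters F S \<longleftrightarrow> (\<forall>T\<subseteq>S. \<exists>f\<in>F. f \<inter> S = T)"

lemma shatters_iff_projection_eq_Pow: "shatters F S \<longleftrightarrow> projection F S = Pow S"
proof -
  have "projection F S \<subseteq> Pow S" unfolding projection_def by blast
  moreover have "shatters F S \<longleftrightarrow> Pow S \<subseteq> projection F S"
    unfolding shatters_def projection_def by (simp add: subset_iff image_iff) (metis eq_commute)
  ultimately show ?thesis by blast
qed

lemma shattered_if_shatters:
  assumes "finite S" "shatters F S"
  shows "shattered F S"
  using assms by (simp add: shattered_def shatters_iff_projection_eq_Pow card_Pow)

lemma shatters_remove_point:
  assumes "x \<notin> S" "shatters ((\<lambda>f. f - {x}) ` F) S"
  shows "shatters F S"
  unfolding shatters_def
proof (intro allI impI)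
  fix T assume "T \<subseteq> S"
  then obtain f where "f \<in> F" "(f - {x}) \<inter> S = T"
    using assms(2) unfolding shatters_def by blast
  with assms(1) show "\<exists>f\<in>F. f \<inter> S = T" by blast
qed

lemma shatters_insert_point:
  assumes "x \<notin> S" "shatters {A \<in> F. x \<notin> A \<and> insert x A \<in> F} S"
  shows "shatters F (insert x S)"
  unfolding shatters_def
proof (intro allI impI)
  fix T assume T: "T \<subseteq> insert x S"
  then obtain A where A: "A \<in> F" "x \<notin> A" "insert x A \<in> F" "A \<inter> S = T - {x}"
    using assms(2) unfolding shatters_def by (metis (no_types, lifting) Diff_subset_conv
        insert_is_Un mem_Collect_eq)
  show "\<exists>f\<in>F. f \<inter> insert x S = T"
  proof (cases "x \<in> T")
    case True
    then have "insert x A \<inter> insert x S = T" using A(4) T by auto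
    with A(3) show ?thesis by blast
  next
    case False
    then have "A \<inter> insert x S = T" using A(2,4) T by auto
    with A(1) show ?thesis by blast
  qed
qed

text \<open>Removing \<open>x\<close> from every member of \<open>F\<close> merges exactly the pairs \<open>A, insert x A\<close>.\<close>

lemma card_remove_point_image:
  assumes "finite F"
  shows "card F = card ((\<lambda>f. f - {x}) ` F) + card {A \<in> F. x \<notin> A \<and> insert x A \<in> F}"
proof -
  define F0 where "F0 = {f \<in> F. x \<notin> f}"
  define Fx where "Fx = {f \<in> F. x \<in> f}"
  define R where "R = (\<lambda>f. f - {x}) ` Fx"
  have F_split: "F = F0 \<union> Fx" "F0 \<inter> Fx = {}" unfolding F0_def Fx_def by auto
  have fin: "finite F0" "finite Fx" "finite R" using assms unfolding F0_def Fx_def R_def by auto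
  have "inj_on (\<lambda>f. f - {x}) Fx"
    unfolding Fx_def by (rule inj_onI) (metis insert_Diff mem_Collect_eq)
  then have card_R: "card R = card Fx" unfolding R_def by (rule card_image)
  have "(\<lambda>f. f - {x}) ` F0 = F0" unfolding F0_def by force
  then have image_eq: "(\<lambda>f. f - {x}) ` F = F0 \<union> R" unfolding R_def using F_split(1) by auto
  have "F0 \<inter> R = {A \<in> F. x \<notin> A \<and> insert x A \<in> F}"
    unfolding F0_def R_def Fx_def by (auto simp: insert_absorb image_iff)
  then have "card ((\<lambda>f. f - {x}) ` F) + card {A \<in> F. x \<notin> A \<and> insert x A \<in> F} = card F0 + card Fx"
    using card_Un_Int[OF fin(1,3)] image_eq card_R by simp
  also have "\<dots> = card F" using card_Un_disjoint[OF fin(1,2) F_split(2)] F_split(1) by simp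
  finally show ?thesis by simp
qed

text \<open>In the induction step the sets shattered by the
  two families of \<open>card_remove_point_image\<close> yield distinct sets shattered by \<open>F\<close>, avoiding
  resp. containing \<open>x\<close>.\<close>

lemma card_le_card_shattered_subsets:
  assumes "finite X" "F \<subseteq> Pow X"
  shows "card F \<le> card {S. S \<subseteq> X \<and> shatters F S}"
  using assms
proof (induction X arbitrary: F rule: finite_induct)
  case empty
  show ?case
  proof (cases "F = {}")
    case False
    with empty have "F = {{}}" by (metis Pow_empty subset_singletonD)
    moreover from this have "{S. S \<subseteq> {} \<and> shatters F S} = {{}}" by (auto simp: shatters_def)
    ultimately show ?thesis by simp
  qed simp
next
  case (insert x X)
  define F1 where "F1 = (\<lambda>f. f - {x}) ` F"
  define F2 where "F2 = {A \<in> F. x \<notin> A \<and> insert x A \<in> F}"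
  define Sh where "Sh G = {S. S \<subseteq> X \<and> shatters G S}" for G
  have fin_Sh: "finite (Sh G)" for G unfolding Sh_def using insert.hyps(1) by simp
  have "finite F" using insert.hyps(1) insert.prems finite_subset by blast
  then have "card F = card F1 + card F2"
    unfolding F1_def F2_def by (rule card_remove_point_image)
  also have "\<dots> \<le> card (Sh F1) + card (Sh F2)"
  proof (rule add_mono)
    have "F1 \<subseteq> Pow X" "F2 \<subseteq> Pow X"
      using insert.prems unfolding F1_def F2_def by auto
    then show "card F1 \<le> card (Sh F1)" "card F2 \<le> card (Sh F2)"
      unfolding Sh_def by (simp_all add: insert.IH)
  qed
  also have "\<dots> = card (Sh F1 \<union> insert x ` Sh F2)"
  proof -
    have x_notin: "x \<notin> S" if "S \<in> Sh G" for S G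
      using that insert.hyps(2) unfolding Sh_def by blast
    have "inj_on (insert x) (Sh F2)"
    proof (rule inj_onI)
      fix S T assume "S \<in> Sh F2" "T \<in> Sh F2" "insert x S = insert x T"
      with x_notin show "S = T" by (metis Diff_insert_absorb)
    qed
    moreover have "Sh F1 \<inter> insert x ` Sh F2 = {}" using x_notin by blast
    ultimately show ?thesis using fin_Sh by (simp add: card_Un_disjoint card_image)
  qed
  also have "\<dots> \<le> card {S. S \<subseteq> insert x X \<and> shatters F S}"
  proof (rule card_mono)
    have "shatters F S" if "S \<in> Sh F1" for S
      using that insert.hyps(2) shatters_remove_point[of x S F] unfolding Sh_def F1_def by blast
    moreover have "shatters F (insert x S)" if "S \<in> Sh F2" for S
      using that insert.hyps(2) shatters_insert_point[of x S F] unfolding Sh_def F2_def by blast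
    ultimately show "Sh F1 \<union> insert x ` Sh F2 \<subseteq> {S. S \<subseteq> insert x X \<and> shatters F S}"
      unfolding Sh_def by blast
  qed (use insert.hyps(1) in simp)
  finally show ?case .
qed

lemma card_subsets_card_le:
  assumes "finite C"
  shows "card {S. S \<subseteq> C \<and> card S \<le> d} \<le> card C ^ d + 1"
proof -
  define L where "L = {xs. set xs \<subseteq> C \<and> length xs = d}"
  have "finite L" unfolding L_def using assms by (simp add: finite_lists_length_eq)
  have "{S. S \<subseteq> C \<and> card S \<le> d} \<subseteq> insert {} (set ` L)"
  proof
    fix S assume S: "S \<in> {S. S \<subseteq> C \<and> card S \<le> d}"
    show "S \<in> insert {} (set ` L)"
    proof (cases "S = {}")
      case False
      obtain xs where xs: "set xs = S" "distinct xs"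
        using S assms finite_subset finite_distinct_list by (metis mem_Collect_eq)
      then have "xs \<noteq> []" "length xs \<le> d" using False S distinct_card by fastforce+
      then have "set (xs @ replicate (d - length xs) (hd xs)) = S"
        "length (xs @ replicate (d - length xs) (hd xs)) = d"
        using xs(1) by auto
      then show ?thesis unfolding L_def using S by (metis (mono_tags, lifting) image_iff
            insertI2 mem_Collect_eq)
    qed simp
  qed
  then have "card {S. S \<subseteq> C \<and> card S \<le> d} \<le> card (insert {} (set ` L))"
    using \<open>finite L\<close> by (intro card_mono) auto
  also have "\<dots> \<le> card L + 1"
    using \<open>finite L\<close> card_image_le[of L set] by (simp add: card_insert_if)
  also have "\<dots> = card C ^ d + 1" unfolding L_def using assms by (simp add: card_lists_length_eq)
  finally show ?thesis .
qed

lemma card_le_vc: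
  assumes "finite X" "S \<subseteq> X" "shattered F S"
  shows "card S \<le> vc X F"
proof -
  have "{card S | S. S \<subseteq> X \<and> shattered F S} \<subseteq> card ` Pow X" by auto
  then have "finite {card S | S. S \<subseteq> X \<and> shattered F S}"
    using assms(1) finite_subset by blast
  with assms(2,3) show ?thesis unfolding vc_def by (auto intro: Max_ge)
qed

lemma test_cover_of_size_TC:
  assumes "\<exists>C. test_cover V E C"
  shows "\<exists>C. test_cover V E C \<and> card C = TC V E"
proof -
  from assms have "\<exists>k C. test_cover V E C \<and> card C = k" by blast
  then show ?thesis unfolding TC_def by (rule LeastI_ex)
qed

lemma test_cover_inj_on_traces:
  assumes "test_cover V E C"
  shows "inj_on (\<lambda>v. {e \<in> C. v \<in> e}) V"
proof (rule inj_onI, rule ccontr)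
  fix x y assume "x \<in> V" "y \<in> V" "{e \<in> C. x \<in> e} = {e \<in> C. y \<in> e}" "x \<noteq> y"
  with assms show False unfolding test_cover_def by blast
qed

lemma shattered_dual_if_shatters_traces:
  assumes "C \<subseteq> E" "S \<subseteq> C" "finite S" "shatters ((\<lambda>v. {e \<in> C. v \<in> e}) ` V) S"
  shows "shattered (dual_edges V E) S"
proof (rule shattered_if_shatters[OF assms(3)])
  have "{e \<in> C. v \<in> e} \<inter> S = {e \<in> E. v \<in> e} \<inter> S" for v using assms(1,2) by blast
  with assms(4) show "shatters (dual_edges V E) S"
    unfolding shatters_def dual_edges_def by (metis (no_types, lifting) image_iff)
qed

lemma card_le_vc_dual_if_shatters_traces:
  assumes "finite E" "C \<subseteq> E" "S \<subseteq> C" "shatters ((\<lambda>v. {e \<in> C. v \<in> e}) ` V) S"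
  shows "card S \<le> vc_dual V E"
proof -
  have "finite S" using finite_subset[OF subset_trans[OF assms(3,2)] assms(1)] .
  then have "shattered (dual_edges V E) S"
    using assms(2-4) by (intro shattered_dual_if_shatters_traces)
  then show ?thesis unfolding vc_dual_def using assms(1-3) by (intro card_le_vc) auto
qed

theorem proposition1:
  fixes V :: "'a set" and E :: "'a set set"
  assumes "hypergraph V E"
    and "twin_free V E"
    and "\<exists>C. test_cover V E C"
  shows "card V \<le> (TC V E) ^ (vc_dual V E) + 1"
proof -
  have "finite E" using assms(1) unfolding hypergraph_def by (meson finite_Pow_iff rev_finite_subset)
  obtain C where C: "test_cover V E C" "card C = TC V E"
    using test_cover_of_size_TC[OF assms(3)] by blast
  have "C \<subseteq> E" using C(1) unfolding test_cover_def by simp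
  then have "finite C" using \<open>finite E\<close> finite_subset by blast
  define traces where "traces = (\<lambda>v. {e \<in> C. v \<in> e}) ` V"
  have "card V = card traces"
    unfolding traces_def using test_cover_inj_on_traces[OF C(1)] by (simp add: card_image)
  also have "\<dots> \<le> card {S. S \<subseteq> C \<and> shatters traces S}"
    using \<open>finite C\<close> by (rule card_le_card_shattered_subsets) (auto simp: traces_def)
  also have "\<dots> \<le> card {S. S \<subseteq> C \<and> card S \<le> vc_dual V E}"
  proof (rule card_mono)
    show "{S. S \<subseteq> C \<and> shatters traces S} \<subseteq> {S. S \<subseteq> C \<and> card S \<le> vc_dual V E}"
      using \<open>finite E\<close> \<open>C \<subseteq> E\<close> unfolding traces_def
      by (blast intro: card_le_vc_dual_if_shatters_traces)
  qed (use \<open>finite C\<close> in simp)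
  also have "\<dots> \<le> TC V E ^ vc_dual V E + 1"
    using card_subsets_card_le[OF \<open>finite C\<close>] C(2) by simp
  finally show ?thesis .
qed

end
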